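(* Let $\mathbb{A}$ be a non-empty set and $x\in\mathbb{A}^\omega$ a word that is not purely periodic (i.e. not of the form $u^\omega$ with $u\in\mathbb{A}^+$). Define $\varphi:\mathbb{A}^+\to\{0,1\}$ by $\varphi(u)=0$ if $u$ is a prefix of $x$ and $\varphi(u)=1$ otherwise. Then $x$ admits no $\varphi$-sequentially monochromatic factorization.
   Context: A factorization $x=V_0V_1V_2\cdots$ with all $V_i\in\mathbb{A}^+$ is $\varphi$-sequentially monochromatic if there is a color $c$ with $\varphi(V_iV_{i+1}\cdots V_{i+j})=c$ for all $i,j\ge0$. *)

theory Defs
  imports Main
begin

definition is_prefix_of :: "'a list \<Rightarrow> (nat \<Rightarrow> 'a) \<Rightarrow> bool" where
  "is_prefix_of u x \<longleftrightarrow> (\<forall>i<length u. u ! i = x i)"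

definition purely_periodic :: "(nat \<Rightarrow> 'a) \<Rightarrow> bool" where
  "purely_periodic x \<longleftrightarrow> (\<exists>u. u \<noteq> [] \<and> (\<forall>i. x i = u ! (i mod length u)))"

definition is_factorization :: "(nat \<Rightarrow> 'a) \<Rightarrow> (nat \<Rightarrow> 'a list) \<Rightarrow> bool" where
  "is_factorization x V \<longleftrightarrow> (\<forall>i. V i \<noteq> []) \<and>
     (\<forall>n. is_prefix_of (concat (map V [0..<n])) x)"

definition seq_monochromatic :: "('a list \<Rightarrow> 'c) \<Rightarrow> (nat \<Rightarrow> 'a list) \<Rightarrow> bool" where
  "seq_monochromatic \<phi> V \<longleftrightarrow>
     (\<exists>c. \<forall>i j. \<phi> (concat (map V [i..<i+j+1])) = c)"

end

theory Submission
  imports Defs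
begin

text \<open>The first factor V 0 is a prefix of x, so the common colour is that of prefixes.
  Hence every block V 1 \<dots> V k is a prefix of x as well as being the continuation of x
  after V 0. Such blocks become arbitrarily long, so x is invariant under the shift by the
  length of V 0, i.e. x is the periodic word V 0 V 0 V 0 \<dots>.\<close>

lemma length_concat_map_ge:
  assumes "\<forall>i\<in>set xs. V i \<noteq> []"
  shows "length xs \<le> length (concat (map V xs))"
  using assms by (induction xs) (auto simp flip: length_greater_0_conv)

lemma shift_invariant_mod:
  fixes i p :: nat
  assumes shift: "\<forall>k. x (p + k) = x k" and "0 < p"
  shows "x i = x (i mod p)"
proof (induction i rule: less_induct)
  case (less i)
  show ?case
  proof (cases "i < p")
    case False
    then have "x i = x (i - p)" using shift[rule_format, of "i - p"] by simp
    also have "\<dots> = x ((i - p) mod p)" using less \<open>0 < p\<close> False by simp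
    also have "(i - p) mod p = i mod p" using False by (simp add: le_mod_geq)
    finally show ?thesis .
  qed simp
qed

lemma purely_periodicI:
  assumes "u \<noteq> []" "is_prefix_of u x" "\<forall>k. x (length u + k) = x k"
  shows "purely_periodic x"
  unfolding purely_periodic_def
proof (intro exI conjI allI)
  fix i
  have "x i = x (i mod length u)" using shift_invariant_mod assms by blast
  also have "\<dots> = u ! (i mod length u)" using assms(1,2) by (simp add: is_prefix_of_def)
  finally show "x i = u ! (i mod length u)" .
qed (use assms in simp)

lemma is_prefix_of_append_shift:
  assumes "is_prefix_of (u @ w) x" "is_prefix_of w x" "k < length w"
  shows "x (length u + k) = x k"
proof -
  have "x (length u + k) = (u @ w) ! (length u + k)"
    using assms(1,3) unfolding is_prefix_of_def by (metis add_less_cancel_left length_append)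
  also have "\<dots> = w ! k" by (simp add: nth_append)
  also have "\<dots> = x k" using assms(2,3) by (simp add: is_prefix_of_def)
  finally show ?thesis .
qed

theorem mainTheorem12:
  fixes x :: "nat \<Rightarrow> 'a"
  assumes "\<not> purely_periodic x"
  defines "\<phi> \<equiv> (\<lambda>u::'a list. if is_prefix_of u x then (0::nat) else 1)"
  shows "\<not> (\<exists>V. is_factorization x V \<and> seq_monochromatic \<phi> V)"
proof
  assume "\<exists>V. is_factorization x V \<and> seq_monochromatic \<phi> V"
  then obtain V c where ne: "\<forall>i. V i \<noteq> []"
    and pre: "\<forall>n. is_prefix_of (concat (map V [0..<n])) x"
    and mono: "\<forall>i j. \<phi> (concat (map V [i..<i+j+1])) = c"
    unfolding is_factorization_def seq_monochromatic_def by blast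
  have "c = 0" using mono[rule_format, of 0 0] pre[rule_format, of 1] by (simp add: \<phi>_def)
  have "x (length (V 0) + k) = x k" for k
  proof (rule is_prefix_of_append_shift)
    let ?W = "concat (map V [1..<k+2])"
    show "is_prefix_of ?W x"
      using mono[rule_format, of 1 k] \<open>c = 0\<close> by (auto simp: \<phi>_def split: if_splits)
    have "[0..<k+2] = 0 # [1..<k+2]" by (simp add: upt_rec)
    then show "is_prefix_of (V 0 @ ?W) x" using pre[rule_format, of "k+2"] by simp
    show "k < length ?W" using length_concat_map_ge[of "[1..<k+2]" V] ne by (simp del: upt_Suc)
  qed
  then have "purely_periodic x"
    using purely_periodicI[of "V 0" x] ne pre[rule_format, of 1] by simp
  with assms(1) show False ..
qed

end
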